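(* Let $N\ge 2$, $Z=\{1,\dots,N\}$, $p\in\mathbb R$, $K<N$, and let $Z$ be partitioned into consecutive blocks (clusters) $\tilde Z_1,\dots,\tilde Z_K$ with $N_k=|\tilde Z_k|$. Let $W_0=(w^{(0)}_{ij})$ be symmetric with $w^{(0)}_{ij}\ge0$ if $i\ne j$ lie in the same cluster and $w^{(0)}_{ij}=0$ if $i=j$ or $i,j$ lie in different clusters, so $W_0=\mathrm{diag}(\tilde W_1,\dots,\tilde W_K)$. Let $\tilde D_k$ be the degree matrix of $\tilde W_k$, $\tilde L_k=\tilde D_k^{-p}(\tilde D_k-\tilde W_k)\tilde D_k^{-p}$, and assume there is $\theta>0$ such that $\langle\mathbf x,\tilde L_k\mathbf x\rangle\ge\theta\langle\mathbf x,\mathbf x\rangle$ for every $k$ and every $\mathbf x\in\mathbb R^{N_k}$ with $\mathbf x\perp\tilde D_k^p\mathbf 1_k$ ($\mathbf 1_k$ the vector of ones in $\mathbb R^{N_k}$). Let $D_0=\mathrm{diag}(d^{(0)}_i)$ be the degree matrix of $W_0$, $L_0=D_0^{-p}(D_0-W_0)D_0^{-p}$ and, for $\tau^2,\alpha>0$, $C_{\tau,0}=\tau^{2\alpha}(L_0+\tau^2I)^{-\alpha}$, with $j$-th column $\mathbf c_{j,0}$. Define $(\pmb\chi_k)_j=(d^{(0)}_j)^p$ if $j\in\tilde Z_k$ and $0$ otherwise, and $\bar{\pmb\chi}_k=\pmb\chi_k/\|\pmb\chi_k\|$. Then, as $\tau\downarrow0$, $$\big\|\mathbf c_{j,0}-(\bar{\pmb\chi}_k)_j\bar{\pmb\chi}_k\big\|^2\le\Xi\,\tau^{4\alpha}\qquad\forall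 j\in\tilde Z_k,$$ where $\Xi>0$ is a uniform constant.
   Context: The degrees of $W_0$ are positive (guaranteed by the spectral gap assumption, which excludes isolated nodes), so $D_0^{-p}$ is defined. Norms and inner products are Euclidean. *)

theory Defs
  imports "HOL-Analysis.Analysis"
begin

text \<open>Matrices on a finite index set S of naturals are functions nat => nat => real
(only entries with indices in S matter); vectors are functions nat => real.\<close>

definition vinner :: "nat set \<Rightarrow> (nat \<Rightarrow> real) \<Rightarrow> (nat \<Rightarrow> real) \<Rightarrow> real" where
  "vinner S x y = (\<Sum>i\<in>S. x i * y i)"

definition vnorm :: "nat set \<Rightarrow> (nat \<Rightarrow> real) \<Rightarrow> real" where
  "vnorm S x = sqrt (vinner S x x)"

definition mulv :: "nat set \<Rightarrow> (nat \<Rightarrow> nat \<Rightarrow> real) \<Rightarrow> (nat \<Rightarrow> real) \<Rightarrow> (nat \<Rightarrow> real)" where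
  "mulv S A x = (\<lambda>i. \<Sum>j\<in>S. A i j * x j)"

definition degree :: "nat set \<Rightarrow> (nat \<Rightarrow> nat \<Rightarrow> real) \<Rightarrow> nat \<Rightarrow> real" where
  "degree S W i = (\<Sum>j\<in>S. W i j)"

definition laplacian :: "real \<Rightarrow> nat set \<Rightarrow> (nat \<Rightarrow> nat \<Rightarrow> real) \<Rightarrow> nat \<Rightarrow> nat \<Rightarrow> real" where
  "laplacian p S W = (\<lambda>i j. if i \<in> S \<and> j \<in> S then
      degree S W i powr (-p) * ((if i = j then degree S W i else 0) - W i j) * degree S W j powr (-p)
    else 0)"

definition spectral_decomp :: "nat set \<Rightarrow> (nat \<Rightarrow> nat \<Rightarrow> real) \<Rightarrow> (nat \<Rightarrow> nat \<Rightarrow> real) \<Rightarrow> (nat \<Rightarrow> real) \<Rightarrow> bool" where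
  "spectral_decomp S A U lam \<longleftrightarrow>
     (\<forall>k\<in>S. \<forall>l\<in>S. (\<Sum>i\<in>S. U i k * U i l) = (if k = l then 1 else 0)) \<and>
     (\<forall>i\<in>S. \<forall>j\<in>S. A i j = (\<Sum>k\<in>S. lam k * U i k * U j k))"

definition mat_powr :: "nat set \<Rightarrow> (nat \<Rightarrow> nat \<Rightarrow> real) \<Rightarrow> real \<Rightarrow> nat \<Rightarrow> nat \<Rightarrow> real" where
  "mat_powr S A s = (SOME B. \<exists>U lam. spectral_decomp S A U lam \<and>
      B = (\<lambda>i j. if i \<in> S \<and> j \<in> S then (\<Sum>k\<in>S. lam k powr s * U i k * U j k) else 0))"

end

theory Submission
  imports Defs
begin

text \<open>
  The Laplacian L0 of the block-diagonal weight matrix is itself block diagonal. Hence it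
  annihilates each cluster vector chi_k, and the gap assumed on every block adds up to
  <x, L0 x> >= theta |x|^2 for all x orthogonal to the chi_k. Consequently, in an
  orthonormal eigenbasis of L0 + tau^2 I, every eigenvalue mu of L0 is either 0, with
  eigenvector in the span of the chi_k, or at least theta. The matrix
  C_tau - sum_k chib_k chib_k^T therefore has the eigenvalues
  tau^(2 alpha) (mu + tau^2)^(-alpha) - [mu = 0], all bounded in absolute value by
  tau^(2 alpha) theta^(-alpha), which bounds the squared norm of each of its columns by
  theta^(-2 alpha) tau^(4 alpha). For j in cluster k the j-th column of
  sum_l chib_l chib_l^T is chib_k(j) chib_k. The spectral theorem for symmetric matrices
  is obtained by repeatedly maximising the Rayleigh quotient on the orthogonal complement
  of the eigenvectors found so far.
\<close>

section \<open>Vectors indexed by a finite set\<close>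

lemma vinner_commute: "vinner S x y = vinner S y x"
  unfolding vinner_def by (simp add: mult.commute)

lemma vinner_self_nonneg: "0 \<le> vinner S x x"
  unfolding vinner_def by (simp add: sum_nonneg)

lemma vinner_self_eq_0_iff: "finite S \<Longrightarrow> vinner S x x = 0 \<longleftrightarrow> (\<forall>i\<in>S. x i = 0)"
  unfolding vinner_def by (simp add: sum_nonneg_eq_0_iff)

lemma vnorm_power2: "(vnorm S x)\<^sup>2 = vinner S x x"
  unfolding vnorm_def by (simp add: vinner_self_nonneg)

lemma power2_le_vinner_self: "finite S \<Longrightarrow> i \<in> S \<Longrightarrow> (x i)\<^sup>2 \<le> vinner S x x"
  unfolding vinner_def power2_eq_square by (rule member_le_sum) auto

lemma vinner_cong:
  "(\<And>i. i \<in> S \<Longrightarrow> x i = x' i) \<Longrightarrow> (\<And>i. i \<in> S \<Longrightarrow> y i = y' i) \<Longrightarrow> vinner S x y = vinner S x' y'"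
  unfolding vinner_def by simp

lemma vinner_add_left: "vinner S (\<lambda>i. x i + y i) z = vinner S x z + vinner S y z"
  unfolding vinner_def by (simp add: distrib_right sum.distrib)

lemma vinner_add_right: "vinner S z (\<lambda>i. x i + y i) = vinner S z x + vinner S z y"
  unfolding vinner_def by (simp add: distrib_left sum.distrib)

lemma vinner_diff_left: "vinner S (\<lambda>i. x i - y i) z = vinner S x z - vinner S y z"
  unfolding vinner_def by (simp add: left_diff_distrib sum_subtractf)

lemma vinner_diff_right: "vinner S z (\<lambda>i. x i - y i) = vinner S z x - vinner S z y"
  unfolding vinner_def by (simp add: right_diff_distrib sum_subtractf)

lemma vinner_scale_left: "vinner S (\<lambda>i. c * x i) y = c * vinner S x y"
  unfolding vinner_def by (simp add: sum_distrib_left mult.assoc)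

lemma vinner_scale_right: "vinner S y (\<lambda>i. c * x i) = c * vinner S y x"
  unfolding vinner_def by (simp add: sum_distrib_left mult.left_commute)

lemma vinner_sum_left: "vinner S (\<lambda>i. \<Sum>k\<in>T. c k * v k i) y = (\<Sum>k\<in>T. c k * vinner S (v k) y)"
  unfolding vinner_def by (simp add: sum_distrib_left sum_distrib_right mult_ac) (rule sum.swap)

lemma vinner_sum_right: "vinner S y (\<lambda>i. \<Sum>k\<in>T. c k * v k i) = (\<Sum>k\<in>T. c k * vinner S y (v k))"
  using vinner_sum_left[of S c v T y] by (simp add: vinner_commute)

lemma vinner_indicator_left: "finite S \<Longrightarrow> i \<in> S \<Longrightarrow> vinner S (indicator {i}) y = y i"
  unfolding vinner_def by (simp add: indicator_def if_distrib[of "\<lambda>t. t * _"] cong: if_cong)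

lemma mulv_cong: "(\<And>j. j \<in> S \<Longrightarrow> x j = x' j) \<Longrightarrow> mulv S A x i = mulv S A x' i"
  unfolding mulv_def by simp

lemma mulv_add: "mulv S A (\<lambda>j. x j + y j) = (\<lambda>i. mulv S A x i + mulv S A y i)"
  unfolding mulv_def by (simp add: distrib_left sum.distrib)

lemma mulv_diff: "mulv S A (\<lambda>j. x j - y j) = (\<lambda>i. mulv S A x i - mulv S A y i)"
  unfolding mulv_def by (simp add: right_diff_distrib sum_subtractf)

lemma mulv_scale: "mulv S A (\<lambda>j. c * x j) = (\<lambda>i. c * mulv S A x i)"
  unfolding mulv_def by (simp add: sum_distrib_left mult.left_commute)

lemma mulv_sum: "mulv S A (\<lambda>j. \<Sum>k\<in>T. c k * v k j) = (\<lambda>i. \<Sum>k\<in>T. c k * mulv S A (v k) i)"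
  unfolding mulv_def by (simp add: sum_distrib_left mult_ac) (rule ext, rule sum.swap)

lemma vinner_mulv_commute:
  assumes "\<forall>i\<in>S. \<forall>j\<in>S. A i j = A j i"
  shows "vinner S x (mulv S A y) = vinner S (mulv S A x) y"
proof -
  have "vinner S x (mulv S A y) = (\<Sum>i\<in>S. \<Sum>j\<in>S. x i * A i j * y j)"
    unfolding vinner_def mulv_def by (simp add: sum_distrib_left mult.assoc)
  also have "\<dots> = (\<Sum>j\<in>S. \<Sum>i\<in>S. x i * A i j * y j)" by (rule sum.swap)
  also have "\<dots> = vinner S (mulv S A x) y"
    unfolding vinner_def mulv_def using assms
    by (auto simp: sum_distrib_right sum_distrib_left mult.commute intro!: sum.cong)
  finally show ?thesis .
qed

lemma exists_unit_rescaling: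
  assumes "finite S" "0 < vinner S x x"
  obtains c where "0 < c" "vinner S (\<lambda>i. c * x i) (\<lambda>i. c * x i) = 1"
proof
  show "0 < 1 / vnorm S x" using assms(2) by (simp add: vnorm_def)
  have "(vnorm S x)\<^sup>2 = vinner S x x" by (rule vnorm_power2)
  then show "vinner S (\<lambda>i. 1 / vnorm S x * x i) (\<lambda>i. 1 / vnorm S x * x i) = 1"
    unfolding vinner_scale_left vinner_scale_right using assms(2) by (simp add: power2_eq_square)
qed

definition orthonormal_on :: "nat set \<Rightarrow> nat set \<Rightarrow> (nat \<Rightarrow> nat \<Rightarrow> real) \<Rightarrow> bool" where
  "orthonormal_on S T u \<longleftrightarrow> (\<forall>k\<in>T. \<forall>l\<in>T. vinner S (u k) (u l) = (if k = l then 1 else 0))"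

definition orth_proj :: "nat set \<Rightarrow> nat set \<Rightarrow> (nat \<Rightarrow> nat \<Rightarrow> real) \<Rightarrow> (nat \<Rightarrow> real) \<Rightarrow> nat \<Rightarrow> real" where
  "orth_proj S T u x = (\<lambda>i. \<Sum>k\<in>T. vinner S (u k) x * u k i)"

lemma vinner_orthonormal_sum:
  assumes "finite T" "orthonormal_on S T u" "l \<in> T"
  shows "vinner S (u l) (\<lambda>i. \<Sum>k\<in>T. c k * u k i) = c l"
proof -
  have "vinner S (u l) (\<lambda>i. \<Sum>k\<in>T. c k * u k i) = (\<Sum>k\<in>T. if k = l then c l else 0)"
    unfolding vinner_sum_right using assms(2,3) unfolding orthonormal_on_def by (intro sum.cong) auto
  then show ?thesis using assms(1,3) by simp
qed

lemma orth_proj_residual_orthogonal: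
  assumes "finite T" "orthonormal_on S T u" "k \<in> T"
  shows "vinner S (u k) (\<lambda>i. x i - orth_proj S T u x i) = 0"
  using vinner_orthonormal_sum[OF assms] unfolding orth_proj_def by (simp add: vinner_diff_right)

lemma vinner_self_orth_proj_residual:
  assumes "finite T" "orthonormal_on S T u"
  shows "vinner S (\<lambda>i. x i - orth_proj S T u x i) (\<lambda>i. x i - orth_proj S T u x i)
    = vinner S x x - (\<Sum>k\<in>T. (vinner S (u k) x)\<^sup>2)"
proof -
  let ?r = "\<lambda>i. x i - orth_proj S T u x i"
  have "vinner S ?r (orth_proj S T u x) = (\<Sum>k\<in>T. vinner S (u k) x * vinner S (u k) ?r)"
    unfolding orth_proj_def vinner_sum_right by (intro sum.cong refl) (simp add: vinner_commute)
  also have "\<dots> = 0" using orth_proj_residual_orthogonal[OF assms] by simp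
  finally have "vinner S ?r (orth_proj S T u x) = 0" .
  then have "vinner S ?r ?r = vinner S ?r x"
    by (simp add: vinner_diff_right[of S ?r x "orth_proj S T u x"])
  also have "\<dots> = vinner S x x - vinner S (orth_proj S T u x) x"
    by (rule vinner_diff_left)
  also have "vinner S (orth_proj S T u x) x = (\<Sum>k\<in>T. (vinner S (u k) x)\<^sup>2)"
    unfolding orth_proj_def vinner_sum_left by (simp add: power2_eq_square)
  finally show ?thesis .
qed

lemma vinner_self_orthonormal_sum:
  assumes "finite T" "orthonormal_on S T u"
  shows "vinner S (\<lambda>i. \<Sum>k\<in>T. c k * u k i) (\<lambda>i. \<Sum>k\<in>T. c k * u k i) = (\<Sum>k\<in>T. (c k)\<^sup>2)"
  unfolding vinner_sum_left using vinner_orthonormal_sum[OF assms]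
  by (intro sum.cong) (simp_all add: power2_eq_square)

lemma orthonormal_on_normalized:
  assumes "\<And>k l. k \<in> T \<Longrightarrow> l \<in> T \<Longrightarrow> k \<noteq> l \<Longrightarrow> vinner S (v k) (v l) = 0"
    and "\<And>k. k \<in> T \<Longrightarrow> vinner S (v k) (v k) \<noteq> 0"
  shows "orthonormal_on S T (\<lambda>k i. v k i / vnorm S (v k))"
proof -
  have "vinner S (\<lambda>i. v k i / vnorm S (v k)) (\<lambda>i. v l i / vnorm S (v l))
      = vinner S (v k) (v l) / (vnorm S (v k) * vnorm S (v l))" for k l
    unfolding vinner_def by (simp add: sum_divide_distrib)
  moreover have "vnorm S (v k) * vnorm S (v k) = vinner S (v k) (v k)" for k
    using vnorm_power2[of S "v k"] by (simp add: power2_eq_square)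
  ultimately show ?thesis using assms unfolding orthonormal_on_def by auto
qed

lemma sum_vinner_self_residual_indicator:
  assumes "finite S" "finite T" "orthonormal_on S T u"
  shows "(\<Sum>i\<in>S. vinner S (\<lambda>l. indicator {i} l - orth_proj S T u (indicator {i}) l)
                           (\<lambda>l. indicator {i} l - orth_proj S T u (indicator {i}) l))
    = real (card S) - real (card T)"
proof -
  have "(\<Sum>i\<in>S. vinner S (\<lambda>l. indicator {i} l - orth_proj S T u (indicator {i}) l)
                         (\<lambda>l. indicator {i} l - orth_proj S T u (indicator {i}) l))
      = (\<Sum>i\<in>S. 1 - (\<Sum>k\<in>T. (u k i)\<^sup>2))"
    using assms by (intro sum.cong refl)
      (simp add: vinner_self_orth_proj_residual vinner_indicator_left vinner_commute[of S "u _"])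
  also have "\<dots> = real (card S) - (\<Sum>k\<in>T. vinner S (u k) (u k))"
    unfolding vinner_def by (simp add: sum_subtractf sum.swap[of _ S] power2_eq_square)
  also have "(\<Sum>k\<in>T. vinner S (u k) (u k)) = real (card T)"
    using assms(3) unfolding orthonormal_on_def by simp
  finally show ?thesis .
qed

lemma exists_unit_orthogonal:
  assumes "finite S" "finite T" "orthonormal_on S T u" "card T < card S"
  shows "\<exists>x. vinner S x x = 1 \<and> (\<forall>k\<in>T. vinner S (u k) x = 0)"
proof -
  define r where "r i = (\<lambda>l. indicator {i} l - orth_proj S T u (indicator {i}) l)" for i
  have "\<exists>i\<in>S. vinner S (r i) (r i) \<noteq> 0"
    using sum_vinner_self_residual_indicator[OF assms(1-3)] assms(4) unfolding r_def
    by (metis (no_types, lifting) of_nat_less_iff sum.neutral diff_gt_0_iff_gt less_irrefl)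
  then obtain i where "0 < vinner S (r i) (r i)"
    using vinner_self_nonneg by (metis order_less_le)
  then obtain c where "vinner S (\<lambda>l. c * r i l) (\<lambda>l. c * r i l) = 1"
    using exists_unit_rescaling[OF assms(1)] by blast
  moreover have "\<forall>k\<in>T. vinner S (u k) (\<lambda>l. c * r i l) = 0"
    unfolding vinner_scale_right r_def using orth_proj_residual_orthogonal[OF assms(2,3)] by simp
  ultimately show ?thesis by blast
qed

lemma orthonormal_basis_complete:
  assumes "finite S" "orthonormal_on S S u" "i \<in> S" "l \<in> S"
  shows "(\<Sum>k\<in>S. u k i * u k l) = (if i = l then 1 else 0)"
proof -
  define r where "r i = (\<lambda>l. indicator {i} l - orth_proj S S u (indicator {i}) l)" for i
  have "(\<Sum>i\<in>S. vinner S (r i) (r i)) = 0"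
    using sum_vinner_self_residual_indicator[OF assms(1,1,2)] unfolding r_def by simp
  then have "vinner S (r i) (r i) = 0"
    using assms(1,3) by (simp add: sum_nonneg_eq_0_iff vinner_self_nonneg)
  then have "r i l = 0" using assms(1,4) vinner_self_eq_0_iff by blast
  then have "indicator {i} l = (\<Sum>k\<in>S. u k i * u k l)"
    using assms unfolding r_def orth_proj_def
    by (simp add: vinner_commute[of S "u _"] vinner_indicator_left)
  then show ?thesis by (auto simp: indicator_def)
qed

lemma orthonormal_basis_expansion:
  assumes "finite S" "orthonormal_on S S u" "j \<in> S"
  shows "y j = (\<Sum>m\<in>S. vinner S y (u m) * u m j)"
proof -
  have "(\<Sum>m\<in>S. vinner S y (u m) * u m j) = (\<Sum>l\<in>S. y l * (\<Sum>m\<in>S. u m l * u m j))"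
    unfolding vinner_def by (simp add: sum_distrib_left sum_distrib_right mult_ac) (rule sum.swap)
  also have "\<dots> = (\<Sum>l\<in>S. if l = j then y j else 0)"
    using orthonormal_basis_complete[OF assms(1,2) _ assms(3)] by (intro sum.cong) auto
  finally show ?thesis using assms(1,3) by simp
qed

lemma vinner_self_spectral_column_le:
  assumes "finite S" "orthonormal_on S S u" "j \<in> S" "\<And>m. m \<in> S \<Longrightarrow> \<bar>g m\<bar> \<le> G"
  shows "vinner S (\<lambda>i. \<Sum>m\<in>S. (g m * u m j) * u m i) (\<lambda>i. \<Sum>m\<in>S. (g m * u m j) * u m i) \<le> G\<^sup>2"
proof -
  have "vinner S (\<lambda>i. \<Sum>m\<in>S. (g m * u m j) * u m i) (\<lambda>i. \<Sum>m\<in>S. (g m * u m j) * u m i)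
      = (\<Sum>m\<in>S. (g m)\<^sup>2 * (u m j)\<^sup>2)"
    by (simp add: vinner_self_orthonormal_sum[OF assms(1,2)] power_mult_distrib)
  also have "\<dots> \<le> (\<Sum>m\<in>S. G\<^sup>2 * (u m j)\<^sup>2)"
    using assms(4) by (intro sum_mono mult_right_mono)
      (auto simp: abs_le_square_iff[symmetric] intro: order_trans[OF _ abs_ge_self])
  also have "\<dots> = G\<^sup>2"
    using orthonormal_basis_complete[OF assms(1,2,3,3)]
    by (simp add: sum_distrib_left[symmetric] power2_eq_square)
  finally show ?thesis .
qed

lemma sum_outer_eq_orth_proj_basis:
  assumes "finite S" "orthonormal_on S S u" "j \<in> S"
  shows "(\<Sum>k\<in>T. v k j * v k i) = (\<Sum>m\<in>S. u m j * orth_proj S T v (u m) i)"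
proof -
  have "(\<Sum>k\<in>T. v k j * v k i) = (\<Sum>k\<in>T. (\<Sum>m\<in>S. vinner S (v k) (u m) * u m j) * v k i)"
    using orthonormal_basis_expansion[OF assms] by simp
  also have "\<dots> = (\<Sum>m\<in>S. u m j * orth_proj S T v (u m) i)"
    unfolding orth_proj_def sum_distrib_left sum_distrib_right
    by (subst sum.swap) (simp add: mult_ac)
  finally show ?thesis .
qed

section \<open>The spectral theorem for symmetric matrices\<close>

lemma linear_coeff_eq_0_if_quadratic_nonpos:
  fixes b c :: real
  assumes "\<And>t. 2 * t * b + t\<^sup>2 * c \<le> 0"
  shows "b = 0"
proof (rule ccontr)
  assume "b \<noteq> 0"
  define s where "s = 1 / (\<bar>c\<bar> + 1)"
  have s: "0 < s" "s * \<bar>c\<bar> < 1" unfolding s_def by (auto simp: field_simps)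
  have "b\<^sup>2 * (s * (2 + s * c)) \<le> 0"
    using assms[of "s * b"] by (simp add: power2_eq_square algebra_simps)
  moreover have "- (s * \<bar>c\<bar>) \<le> s * c"
    using s mult_left_mono[of "- \<bar>c\<bar>" c s] by simp
  then have "0 < s * (2 + s * c)" using s by (intro mult_pos_pos) auto
  moreover have "0 < b\<^sup>2" using \<open>b \<noteq> 0\<close> by simp
  ultimately show False by (meson mult_pos_pos not_less)
qed

lemma rayleigh_quotient_max_exists:
  assumes "finite S" "finite T" "orthonormal_on S T u" "card T < card S"
  obtains xm where "vinner S xm xm = 1" "\<forall>k\<in>T. vinner S (u k) xm = 0"
    "\<And>y. vinner S y y = 1 \<Longrightarrow> \<forall>k\<in>T. vinner S (u k) y = 0 \<Longrightarrow>
       vinner S y (mulv S A y) \<le> vinner S xm (mulv S A xm)"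
proof -
  \<comment> \<open>Vectors are functions on all of nat; the unit sphere becomes compact in the product
    topology only after the entries outside S are set to 0.\<close>
  define restr where "restr y = (\<lambda>i. if i \<in> S then y i else 0)" for y :: "nat \<Rightarrow> real"
  define box where "box = PiE UNIV (\<lambda>i. if i \<in> S then {-1..1::real} else {0})"
  define X where "X = box \<inter> {x. vinner S x x = 1} \<inter> (\<Inter>k\<in>T. {x. vinner S (u k) x = 0})"
  define f where "f x = vinner S x (mulv S A x)" for x
  have restr_eq: "vinner S (restr y) (restr y) = vinner S y y"
    "vinner S (u k) (restr y) = vinner S (u k) y" "f (restr y) = f y" for y k
    unfolding f_def restr_def by (auto intro!: vinner_cong mulv_cong)
  have restr_in_X: "restr y \<in> X" if "vinner S y y = 1" "\<forall>k\<in>T. vinner S (u k) y = 0" for y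
  proof -
    have "y i \<in> {-1..1}" if "i \<in> S" for i
      using power2_le_vinner_self[OF assms(1) that, of y] \<open>vinner S y y = 1\<close>
      by (simp add: abs_square_le_1 abs_le_iff)
    then show ?thesis
      using that restr_eq unfolding X_def box_def by (auto simp: restr_def PiE_UNIV_domain)
  qed
  have "compact box"
  proof -
    have "compactin (product_topology (\<lambda>i. euclidean) UNIV) box"
      unfolding box_def by (subst compactin_PiE) auto
    then show ?thesis by (simp add: euclidean_product_topology)
  qed
  moreover have "closed {x::nat\<Rightarrow>real. vinner S v x = c}" for v c
    unfolding vinner_def
    by (intro closed_Collect_eq continuous_intros continuous_on_product_coordinates)
  moreover have "closed {x::nat\<Rightarrow>real. vinner S x x = 1}"
    unfolding vinner_def
    by (intro closed_Collect_eq continuous_intros continuous_on_product_coordinates)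
  ultimately have "compact X" unfolding X_def by (intro compact_Int_closed closed_INT) auto
  moreover obtain x0 where "vinner S x0 x0 = 1" "\<forall>k\<in>T. vinner S (u k) x0 = 0"
    using exists_unit_orthogonal[OF assms] by blast
  then have "X \<noteq> {}" using restr_in_X by blast
  moreover have "continuous_on X f"
    unfolding f_def vinner_def mulv_def
    by (intro continuous_intros continuous_on_subset[OF continuous_on_product_coordinates]) auto
  ultimately obtain xm where xm: "xm \<in> X" "\<forall>y\<in>X. f y \<le> f xm"
    using continuous_attains_sup by blast
  have "f y \<le> f xm" if "vinner S y y = 1" "\<forall>k\<in>T. vinner S (u k) y = 0" for y
    using xm(2) restr_in_X[OF that] restr_eq(3) by metis
  then show ?thesis using that[of xm] xm(1) unfolding X_def f_def by blast
qed

lemma rayleigh_max_homogeneous: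
  assumes "finite S"
    and max: "\<And>y. vinner S y y = 1 \<Longrightarrow> \<forall>k\<in>T. vinner S (u k) y = 0 \<Longrightarrow> vinner S y (mulv S A y) \<le> \<mu>"
    and z: "\<forall>k\<in>T. vinner S (u k) z = 0"
  shows "vinner S z (mulv S A z) \<le> \<mu> * vinner S z z"
proof (cases "vinner S z z = 0")
  case True
  then have "\<forall>i\<in>S. z i = 0" using vinner_self_eq_0_iff[OF assms(1)] by blast
  then show ?thesis using True by (simp add: vinner_def)
next
  case False
  then obtain c where c: "0 < c" "vinner S (\<lambda>i. c * z i) (\<lambda>i. c * z i) = 1"
    using exists_unit_rescaling[OF assms(1)] vinner_self_nonneg by (metis order_less_le)
  have "\<forall>k\<in>T. vinner S (u k) (\<lambda>i. c * z i) = 0" using z by (simp add: vinner_scale_right)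
  then have "vinner S (\<lambda>i. c * z i) (mulv S A (\<lambda>i. c * z i)) \<le> \<mu>" by (rule max[OF c(2)])
  then have "c\<^sup>2 * vinner S z (mulv S A z) \<le> c\<^sup>2 * (\<mu> * vinner S z z)"
    using c(2) unfolding mulv_scale vinner_scale_left vinner_scale_right
    by (simp add: power2_eq_square mult.assoc mult.left_commute[of _ \<mu>])
  then show ?thesis using c(1) by simp
qed

lemma rayleigh_max_stationary:
  assumes sym: "\<forall>i\<in>S. \<forall>j\<in>S. A i j = A j i"
    and max: "\<And>z. \<forall>k\<in>T. vinner S (u k) z = 0 \<Longrightarrow> vinner S z (mulv S A z) \<le> \<mu> * vinner S z z"
    and xm: "vinner S xm xm = 1" "vinner S xm (mulv S A xm) = \<mu>" "\<forall>k\<in>T. vinner S (u k) xm = 0"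
    and y: "\<forall>k\<in>T. vinner S (u k) y = 0"
  shows "vinner S y (mulv S A xm) = \<mu> * vinner S y xm"
proof -
  have "2 * t * (vinner S y (mulv S A xm) - \<mu> * vinner S y xm)
      + t\<^sup>2 * (vinner S y (mulv S A y) - \<mu> * vinner S y y) \<le> 0" for t
  proof -
    let ?z = "\<lambda>i. xm i + t * y i"
    have "\<forall>k\<in>T. vinner S (u k) ?z = 0"
      using xm(3) y by (simp add: vinner_add_right vinner_scale_right)
    then have "vinner S ?z (mulv S A ?z) \<le> \<mu> * vinner S ?z ?z" by (rule max)
    moreover have "vinner S xm (mulv S A y) = vinner S y (mulv S A xm)"
      using vinner_mulv_commute[OF sym] vinner_commute by metis
    moreover have "vinner S xm y = vinner S y xm" by (rule vinner_commute)
    ultimately show ?thesis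
      unfolding mulv_add mulv_scale vinner_add_left vinner_add_right vinner_scale_left
        vinner_scale_right
      using xm(1,2) by (simp add: power2_eq_square algebra_simps)
  qed
  then have "vinner S y (mulv S A xm) - \<mu> * vinner S y xm = 0"
    by (rule linear_coeff_eq_0_if_quadratic_nonpos)
  then show ?thesis by simp
qed

lemma exists_eigenvector_orthogonal:
  assumes fin: "finite S" "finite T" and sym: "\<forall>i\<in>S. \<forall>j\<in>S. A i j = A j i"
    and on: "orthonormal_on S T u" and eig: "\<forall>k\<in>T. \<forall>i\<in>S. mulv S A (u k) i = lam k * u k i"
    and card: "card T < card S"
  shows "\<exists>x \<mu>. vinner S x x = 1 \<and> (\<forall>k\<in>T. vinner S (u k) x = 0) \<and> (\<forall>i\<in>S. mulv S A x i = \<mu> * x i)"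
proof -
  obtain xm where xm: "vinner S xm xm = 1" "\<forall>k\<in>T. vinner S (u k) xm = 0"
    and max: "\<And>y. vinner S y y = 1 \<Longrightarrow> \<forall>k\<in>T. vinner S (u k) y = 0 \<Longrightarrow>
       vinner S y (mulv S A y) \<le> vinner S xm (mulv S A xm)"
    using rayleigh_quotient_max_exists[OF fin on card] by blast
  define \<mu> where "\<mu> = vinner S xm (mulv S A xm)"
  define y where "y i = mulv S A xm i - \<mu> * xm i" for i
  have "vinner S (u k) y = 0" if k: "k \<in> T" for k
  proof -
    have "vinner S (u k) (mulv S A xm) = vinner S (mulv S A (u k)) xm"
      by (rule vinner_mulv_commute[OF sym])
    also have "\<dots> = lam k * vinner S (u k) xm"
      using eig k by (simp add: vinner_cong[of S _ "\<lambda>i. lam k * u k i"] vinner_scale_left)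
    finally show ?thesis using xm(2) k unfolding y_def by (simp add: vinner_diff_right vinner_scale_right)
  qed
  moreover have "vinner S z (mulv S A z) \<le> \<mu> * vinner S z z"
    if "\<forall>k\<in>T. vinner S (u k) z = 0" for z
    unfolding \<mu>_def using fin(1) max that by (rule rayleigh_max_homogeneous)
  ultimately have "vinner S y (mulv S A xm) = \<mu> * vinner S y xm"
    using rayleigh_max_stationary[OF sym _ xm(1) \<mu>_def[symmetric] xm(2)] by blast
  have "vinner S y y = vinner S y (\<lambda>i. mulv S A xm i - \<mu> * xm i)"
    by (rule vinner_cong) (simp_all add: y_def)
  also have "\<dots> = 0"
    using \<open>vinner S y (mulv S A xm) = \<mu> * vinner S y xm\<close>
    by (simp add: vinner_diff_right vinner_scale_right)
  finally have "vinner S y y = 0" .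
  then have "\<forall>i\<in>S. mulv S A xm i = \<mu> * xm i"
    using vinner_self_eq_0_iff[OF fin(1)] unfolding y_def by simp
  then show ?thesis using xm by blast
qed

lemma exists_orthonormal_eigenvectors:
  assumes "finite S" "\<forall>i\<in>S. \<forall>j\<in>S. A i j = A j i" "F \<subseteq> S"
  shows "\<exists>u lam. orthonormal_on S F u \<and> (\<forall>k\<in>F. \<forall>i\<in>S. mulv S A (u k) i = lam k * u k i)"
  using finite_subset[OF assms(3,1)] assms(3)
proof (induction rule: finite_subset_induct')
  case empty
  show ?case unfolding orthonormal_on_def by auto
next
  case (insert a F)
  then obtain u lam where on: "orthonormal_on S F u"
    and eig: "\<forall>k\<in>F. \<forall>i\<in>S. mulv S A (u k) i = lam k * u k i"
    by blast
  have "F \<subset> S" using insert.hyps(2,3,4) by blast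
  then have "card F < card S" using assms(1) by (rule psubset_card_mono[rotated])
  then obtain x \<mu> where x: "vinner S x x = 1" "\<forall>k\<in>F. vinner S (u k) x = 0"
    "\<forall>i\<in>S. mulv S A x i = \<mu> * x i"
    using exists_eigenvector_orthogonal[OF assms(1) insert.hyps(1) assms(2) on eig] by blast
  have x_orth: "\<forall>l\<in>F. vinner S x (u l) = 0" using x(2) by (metis vinner_commute)
  let ?u = "u(a := x)" and ?lam = "lam(a := \<mu>)"
  have "vinner S (?u k) (?u l) = (if k = l then 1 else 0)" if "k \<in> insert a F" "l \<in> insert a F" for k l
  proof (cases "k = a"; cases "l = a")
    assume "k \<noteq> a" "l \<noteq> a"
    then show ?thesis using on that unfolding orthonormal_on_def by simp
  qed (use x(1,2) x_orth that \<open>a \<notin> F\<close> in auto)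
  moreover have "mulv S A (?u k) i = ?lam k * ?u k i" if "k \<in> insert a F" "i \<in> S" for k i
    using eig x(3) that by (cases "k = a") auto
  ultimately show ?case unfolding orthonormal_on_def by blast
qed

lemma spectral_decomp_exists:
  assumes "finite S" "\<forall>i\<in>S. \<forall>j\<in>S. A i j = A j i"
  shows "\<exists>U lam. spectral_decomp S A U lam"
proof -
  obtain u lam where on: "orthonormal_on S S u"
    and eig: "\<forall>k\<in>S. \<forall>i\<in>S. mulv S A (u k) i = lam k * u k i"
    using exists_orthonormal_eigenvectors[OF assms order_refl] by blast
  have "A i j = (\<Sum>k\<in>S. lam k * u k i * u k j)" if "i \<in> S" "j \<in> S" for i j
  proof -
    have "A i j = (\<Sum>k\<in>S. vinner S (A i) (u k) * u k j)"
      by (rule orthonormal_basis_expansion[OF assms(1) on \<open>j \<in> S\<close>])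
    also have "\<dots> = (\<Sum>k\<in>S. lam k * u k i * u k j)"
      using eig \<open>i \<in> S\<close> by (intro sum.cong) (auto simp: vinner_def mulv_def)
    finally show ?thesis .
  qed
  then have "spectral_decomp S A (\<lambda>i k. u k i) lam"
    using on unfolding spectral_decomp_def orthonormal_on_def vinner_def by auto
  then show ?thesis by blast
qed

lemma mat_powr_spectral:
  assumes "finite S" "\<forall>i\<in>S. \<forall>j\<in>S. A i j = A j i"
  obtains U lam where "spectral_decomp S A U lam"
    "\<And>i j. i \<in> S \<Longrightarrow> j \<in> S \<Longrightarrow> mat_powr S A s i j = (\<Sum>k\<in>S. lam k powr s * U i k * U j k)"
proof -
  have "\<exists>B U lam. spectral_decomp S A U lam \<and>
      B = (\<lambda>i j. if i \<in> S \<and> j \<in> S then (\<Sum>k\<in>S. lam k powr s * U i k * U j k) else 0)"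
    using spectral_decomp_exists[OF assms] by blast
  then have "\<exists>U lam. spectral_decomp S A U lam \<and> mat_powr S A s =
      (\<lambda>i j. if i \<in> S \<and> j \<in> S then (\<Sum>k\<in>S. lam k powr s * U i k * U j k) else 0)"
    unfolding mat_powr_def by (rule someI_ex)
  then show ?thesis using that by auto
qed

lemma spectral_decomp_orthonormal:
  "spectral_decomp S A U lam \<Longrightarrow> orthonormal_on S S (\<lambda>k i. U i k)"
  unfolding spectral_decomp_def orthonormal_on_def vinner_def by auto

lemma spectral_decomp_eigenvector:
  assumes "finite S" "spectral_decomp S A U lam" "m \<in> S" "i \<in> S"
  shows "mulv S A (\<lambda>l. U l m) i = lam m * U i m"
proof -
  have "mulv S A (\<lambda>l. U l m) i = (\<Sum>k\<in>S. lam k * U i k * (\<Sum>l\<in>S. U l k * U l m))"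
    using assms(2,4) unfolding mulv_def spectral_decomp_def
    by (simp add: sum_distrib_left sum_distrib_right mult_ac) (rule sum.swap)
  also have "\<dots> = (\<Sum>k\<in>S. if k = m then lam m * U i m else 0)"
    using assms(2,3) unfolding spectral_decomp_def by (intro sum.cong) auto
  finally show ?thesis using assms(1,3) by simp
qed

section \<open>Resolvent powers under a spectral gap\<close>

lemma resolvent_power_scalar_bound:
  fixes \<mu> \<theta> \<alpha> \<tau> :: real
  assumes "\<mu> = 0 \<or> \<theta> \<le> \<mu>" "0 < \<theta>" "0 < \<alpha>" "0 < \<tau>"
  shows "\<bar>\<tau> powr (2 * \<alpha>) * (\<mu> + \<tau>\<^sup>2) powr (- \<alpha>) - (if \<mu> = 0 then 1 else 0)\<bar>
    \<le> \<tau> powr (2 * \<alpha>) * \<theta> powr (- \<alpha>)"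
proof (cases "\<mu> = 0")
  case True
  have "(\<tau>\<^sup>2) powr (- \<alpha>) = (\<tau> powr 2) powr (- \<alpha>)" using assms(4) by simp
  also have "\<dots> = \<tau> powr (- (2 * \<alpha>))" by (simp add: powr_powr)
  finally have "\<tau> powr (2 * \<alpha>) * (\<mu> + \<tau>\<^sup>2) powr (- \<alpha>) = 1"
    using True assms(4) by (simp add: powr_add[symmetric])
  then show ?thesis using True by simp
next
  case False
  then have "\<theta> \<le> \<mu> + \<tau>\<^sup>2" using assms(1) by (smt (verit) zero_le_power2)
  then have "(\<mu> + \<tau>\<^sup>2) powr (- \<alpha>) \<le> \<theta> powr (- \<alpha>)"
    using assms(2,3) by (intro powr_mono2') auto
  then show ?thesis using False by (simp add: mult_left_mono)
qed

locale kernel_spectral_gap =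
  fixes S T :: "nat set" and v M :: "nat \<Rightarrow> nat \<Rightarrow> real" and \<theta> :: real
  assumes finite_S: "finite S" and finite_T: "finite T"
    and symmetric: "\<forall>i\<in>S. \<forall>j\<in>S. M i j = M j i"
    and orthonormal: "orthonormal_on S T v"
    and kernel: "\<And>k i. k \<in> T \<Longrightarrow> i \<in> S \<Longrightarrow> mulv S M (v k) i = 0"
    and gap: "\<And>x. \<forall>k\<in>T. vinner S (v k) x = 0 \<Longrightarrow> \<theta> * vinner S x x \<le> vinner S x (mulv S M x)"
    and gap_pos: "0 < \<theta>"
begin

lemma vinner_kernel_mulv: "k \<in> T \<Longrightarrow> vinner S (v k) (mulv S M x) = 0"
  unfolding vinner_mulv_commute[OF symmetric] by (simp add: vinner_def kernel)

lemma quadratic_form_ge_residual: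
  "\<theta> * vinner S (\<lambda>i. x i - orth_proj S T v x i) (\<lambda>i. x i - orth_proj S T v x i)
    \<le> vinner S x (mulv S M x)"
proof -
  let ?r = "\<lambda>i. x i - orth_proj S T v x i"
  have "mulv S M (orth_proj S T v x) i = 0" if "i \<in> S" for i
    unfolding orth_proj_def mulv_sum using kernel that by simp
  then have "vinner S ?r (mulv S M ?r) = vinner S ?r (mulv S M x)"
    unfolding mulv_diff by (intro vinner_cong) auto
  also have "\<dots> = vinner S x (mulv S M x)"
    unfolding vinner_diff_left orth_proj_def vinner_sum_left by (simp add: vinner_kernel_mulv)
  finally show ?thesis
    using gap[of ?r] orth_proj_residual_orthogonal[OF finite_T orthonormal] by simp
qed

lemma eigenvector_dichotomy:
  assumes w: "vinner S w w = 1" and eig: "\<forall>i\<in>S. mulv S M w i = \<mu> * w i"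
  shows "(\<mu> = 0 \<and> (\<forall>i\<in>S. orth_proj S T v w i = w i)) \<or> (\<theta> \<le> \<mu> \<and> (\<forall>i\<in>S. orth_proj S T v w i = 0))"
proof -
  have Mw: "vinner S y (mulv S M w) = \<mu> * vinner S y w" for y
    using eig by (simp add: vinner_cong[of S y y _ "\<lambda>i. \<mu> * w i"] vinner_scale_right)
  show ?thesis
  proof (cases "\<mu> = 0")
    case True
    let ?r = "\<lambda>i. w i - orth_proj S T v w i"
    have "\<theta> * vinner S ?r ?r \<le> 0" using quadratic_form_ge_residual[of w] Mw True by simp
    then have "vinner S ?r ?r = 0"
      using gap_pos vinner_self_nonneg[of S ?r] by (simp add: mult_le_0_iff)
    then show ?thesis using True vinner_self_eq_0_iff[OF finite_S] by auto
  next
    case False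
    have "\<forall>k\<in>T. vinner S (v k) w = 0"
    proof
      fix k assume "k \<in> T"
      then have "\<mu> * vinner S (v k) w = 0" using vinner_kernel_mulv Mw by metis
      then show "vinner S (v k) w = 0" using False by simp
    qed
    moreover from this have "\<theta> \<le> \<mu>" using gap[of w] Mw w by simp
    ultimately show ?thesis by (simp add: orth_proj_def)
  qed
qed

lemma shifted_eigenvector_dichotomy:
  assumes "spectral_decomp S (\<lambda>i j. M i j + (if i = j then c else 0)) U lam" "m \<in> S"
  shows "(lam m - c = 0 \<and> (\<forall>i\<in>S. orth_proj S T v (\<lambda>i. U i m) i = U i m))
    \<or> (\<theta> \<le> lam m - c \<and> (\<forall>i\<in>S. orth_proj S T v (\<lambda>i. U i m) i = 0))"
proof (rule eigenvector_dichotomy)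
  show "vinner S (\<lambda>i. U i m) (\<lambda>i. U i m) = 1"
    using spectral_decomp_orthonormal[OF assms(1)] assms(2) unfolding orthonormal_on_def by auto
  show "\<forall>i\<in>S. mulv S M (\<lambda>i. U i m) i = (lam m - c) * U i m"
  proof
    fix i assume "i \<in> S"
    have "mulv S (\<lambda>i j. M i j + (if i = j then c else 0)) (\<lambda>i. U i m) i = mulv S M (\<lambda>i. U i m) i + c * U i m"
      using finite_S \<open>i \<in> S\<close> unfolding mulv_def
      by (simp add: distrib_right sum.distrib if_distrib[of "\<lambda>t. t * _"] cong: if_cong)
    then show "mulv S M (\<lambda>i. U i m) i = (lam m - c) * U i m"
      using spectral_decomp_eigenvector[OF finite_S assms(1,2) \<open>i \<in> S\<close>] by (simp add: algebra_simps)
  qed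
qed

lemma resolvent_power_minus_projection:
  assumes "0 < \<alpha>" "0 < \<tau>" "j \<in> S"
  shows "(vnorm S (\<lambda>i. \<tau> powr (2 * \<alpha>) * mat_powr S (\<lambda>i j. M i j + (if i = j then \<tau>\<^sup>2 else 0)) (- \<alpha>) i j
            - (\<Sum>k\<in>T. v k j * v k i)))\<^sup>2 \<le> \<theta> powr (- 2 * \<alpha>) * \<tau> powr (4 * \<alpha>)"
proof -
  define A where "A i j = M i j + (if i = j then \<tau>\<^sup>2 else 0)" for i j
  have "\<forall>i\<in>S. \<forall>j\<in>S. A i j = A j i" using symmetric unfolding A_def by auto
  then obtain U lam where sd: "spectral_decomp S A U lam"
    and powr: "\<And>i j. i \<in> S \<Longrightarrow> j \<in> S \<Longrightarrow>
      mat_powr S A (- \<alpha>) i j = (\<Sum>m\<in>S. lam m powr (- \<alpha>) * U i m * U j m)"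
    using mat_powr_spectral[OF finite_S, where s = "- \<alpha>"] by blast
  define u where "u m i = U i m" for m i
  define \<mu> where "\<mu> m = lam m - \<tau>\<^sup>2" for m
  have onb: "orthonormal_on S S u" unfolding u_def by (rule spectral_decomp_orthonormal[OF sd])
  have dichotomy: "(\<mu> m = 0 \<and> (\<forall>i\<in>S. orth_proj S T v (u m) i = u m i))
      \<or> (\<theta> \<le> \<mu> m \<and> (\<forall>i\<in>S. orth_proj S T v (u m) i = 0))" if "m \<in> S" for m
    using shifted_eigenvector_dichotomy[OF sd[unfolded A_def] that] unfolding u_def \<mu>_def .
  define g where "g m = \<tau> powr (2 * \<alpha>) * (\<mu> m + \<tau>\<^sup>2) powr (- \<alpha>) - (if \<mu> m = 0 then 1 else 0)" for m
  define G where "G = \<tau> powr (2 * \<alpha>) * \<theta> powr (- \<alpha>)"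
  have column: "\<tau> powr (2 * \<alpha>) * mat_powr S A (- \<alpha>) i j - (\<Sum>k\<in>T. v k j * v k i)
      = (\<Sum>m\<in>S. (g m * u m j) * u m i)" if "i \<in> S" for i
  proof -
    have "(\<Sum>k\<in>T. v k j * v k i) = (\<Sum>m\<in>S. u m j * orth_proj S T v (u m) i)"
      by (rule sum_outer_eq_orth_proj_basis[OF finite_S onb assms(3)])
    also have "\<dots> = (\<Sum>m\<in>S. u m j * (if \<mu> m = 0 then u m i else 0))"
    proof (intro sum.cong refl)
      fix m assume "m \<in> S"
      show "u m j * orth_proj S T v (u m) i = u m j * (if \<mu> m = 0 then u m i else 0)"
        using dichotomy[OF \<open>m \<in> S\<close>] \<open>i \<in> S\<close> gap_pos by auto
    qed
    finally have proj: "(\<Sum>k\<in>T. v k j * v k i) = \<dots>" .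
    have "\<tau> powr (2 * \<alpha>) * mat_powr S A (- \<alpha>) i j
        = (\<Sum>m\<in>S. \<tau> powr (2 * \<alpha>) * (\<mu> m + \<tau>\<^sup>2) powr (- \<alpha>) * u m j * u m i)"
      using powr[OF that assms(3)] unfolding u_def \<mu>_def by (simp add: sum_distrib_left mult_ac)
    then have "\<tau> powr (2 * \<alpha>) * mat_powr S A (- \<alpha>) i j - (\<Sum>k\<in>T. v k j * v k i)
        = (\<Sum>m\<in>S. \<tau> powr (2 * \<alpha>) * (\<mu> m + \<tau>\<^sup>2) powr (- \<alpha>) * u m j * u m i
            - u m j * (if \<mu> m = 0 then u m i else 0))"
      unfolding proj sum_subtractf by simp
    also have "\<dots> = (\<Sum>m\<in>S. (g m * u m j) * u m i)"
      unfolding g_def by (intro sum.cong) (auto simp: algebra_simps)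
    finally show ?thesis .
  qed
  have "(vnorm S (\<lambda>i. \<tau> powr (2 * \<alpha>) * mat_powr S A (- \<alpha>) i j - (\<Sum>k\<in>T. v k j * v k i)))\<^sup>2
      = vinner S (\<lambda>i. \<Sum>m\<in>S. (g m * u m j) * u m i) (\<lambda>i. \<Sum>m\<in>S. (g m * u m j) * u m i)"
    unfolding vnorm_power2 using column by (intro vinner_cong) auto
  also have "\<dots> \<le> G\<^sup>2"
  proof (rule vinner_self_spectral_column_le[OF finite_S onb assms(3)])
    fix m assume "m \<in> S"
    show "\<bar>g m\<bar> \<le> G"
      unfolding g_def G_def using dichotomy[OF \<open>m \<in> S\<close>] gap_pos assms(1,2)
      by (intro resolvent_power_scalar_bound) auto
  qed
  also have "G\<^sup>2 = \<theta> powr (- 2 * \<alpha>) * \<tau> powr (4 * \<alpha>)"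
    unfolding G_def by (simp add: power2_eq_square powr_add[symmetric] mult_ac)
  finally show ?thesis unfolding A_def .
qed

end

section \<open>Consecutive blocks\<close>

definition block :: "(nat \<Rightarrow> nat) \<Rightarrow> nat \<Rightarrow> nat set" where
  "block b k = {b (k - 1) + 1 .. b k}"

lemma block_bound_mono:
  fixes b :: "nat \<Rightarrow> nat"
  assumes "\<forall>k\<in>{1..K}. b (k - 1) < b k" "m \<le> n" "n \<le> K"
  shows "b m \<le> b n"
  using assms(2)
proof (induction rule: dec_induct)
  case (step i)
  have "Suc i \<in> {1..K}" using step.hyps(2) assms(3) by simp
  then have "b i < b (Suc i)" using assms(1) by fastforce
  then show ?case using step.IH by simp
qed simp

lemma block_last_mem:
  assumes "\<forall>k\<in>{1..K}. b (k - 1) < b k" "k \<in> {1..K}"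
  shows "b k \<in> block b k"
proof -
  have "b (k - 1) < b k" using assms by blast
  then show ?thesis unfolding block_def by simp
qed

lemma blocks_disjoint:
  assumes "\<forall>k\<in>{1..K}. b (k - 1) < b k" "k \<in> {1..K}" "l \<in> {1..K}" "k \<noteq> l"
  shows "block b k \<inter> block b l = {}"
proof -
  have "block b k \<inter> block b l = {}" if "k < l" "k \<in> {1..K}" "l \<in> {1..K}" for k l
  proof -
    have "b k \<le> b (l - 1)" using that by (intro block_bound_mono[OF assms(1)]) auto
    then show ?thesis unfolding block_def by auto
  qed
  then show ?thesis using assms(2-4) by (metis Int_commute linorder_neqE_nat)
qed

lemma UN_blocks:
  assumes "b 0 = 0" "\<forall>k\<in>{1..K}. b (k - 1) < b k"
  shows "(\<Union>k\<in>{1..K}. block b k) = {1..b K}"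
proof
  show "(\<Union>k\<in>{1..K}. block b k) \<subseteq> {1..b K}"
  proof (rule UN_least)
    fix k assume "k \<in> {1..K}"
    then have "b k \<le> b K" by (intro block_bound_mono[OF assms(2)]) auto
    then show "block b k \<subseteq> {1..b K}" unfolding block_def by auto
  qed
  show "{1..b K} \<subseteq> (\<Union>k\<in>{1..K}. block b k)"
  proof
    fix i assume i: "i \<in> {1..b K}"
    define k where "k = (LEAST k. i \<le> b k)"
    have "i \<le> b K" using i by simp
    then have "i \<le> b k" "k \<le> K" unfolding k_def by (rule LeastI, rule Least_le)
    moreover have "k \<noteq> 0" using \<open>i \<le> b k\<close> i assms(1) by (cases k) auto
    moreover have "\<not> i \<le> b (k - 1)" unfolding k_def
      by (rule not_less_Least) (use \<open>k \<noteq> 0\<close> in \<open>simp add: k_def\<close>)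
    ultimately show "i \<in> (\<Union>k\<in>{1..K}. block b k)" unfolding block_def by (intro UN_I[of k]) auto
  qed
qed

lemma the_block_index:
  assumes "\<forall>k\<in>{1..K}. b (k - 1) < b k" "k \<in> {1..K}" "i \<in> block b k"
  shows "(THE l. l \<in> {1..K} \<and> i \<in> block b l) = k"
  using blocks_disjoint[OF assms(1)] assms(2,3) by (intro the_equality) blast+

section \<open>Laplacians of block-diagonal weight matrices\<close>

lemma laplacian_symmetric:
  "\<forall>i\<in>S. \<forall>j\<in>S. W i j = W j i \<Longrightarrow> \<forall>i\<in>S. \<forall>j\<in>S. laplacian p S W i j = laplacian p S W j i"
  unfolding laplacian_def by (auto simp: mult_ac)

lemma mulv_degree_powr_diag_ones:
  "finite S \<Longrightarrow> a \<in> S \<Longrightarrow>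
    mulv S (\<lambda>i j. degree S W i powr p * (if i = j then 1 else 0)) (\<lambda>_. 1) a = degree S W a powr p"
  unfolding mulv_def by (simp add: if_distrib[of "\<lambda>t. _ * t"] cong: if_cong)

definition laplacian_gap :: "real \<Rightarrow> nat set \<Rightarrow> (nat \<Rightarrow> nat \<Rightarrow> real) \<Rightarrow> real \<Rightarrow> bool" where
  "laplacian_gap p S W \<theta> \<longleftrightarrow> (\<forall>x.
     vinner S x (mulv S (\<lambda>i j. degree S W i powr p * (if i = j then 1 else 0)) (\<lambda>_. 1)) = 0
     \<longrightarrow> vinner S x (mulv S (laplacian p S W) x) \<ge> \<theta> * vinner S x x)"

text \<open>A node of degree 0 would give a unit vector orthogonal to D^p 1 on which the Laplacian
  vanishes, because 0 powr s = 0; so the gap assumption excludes isolated nodes.\<close>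

lemma degree_pos_if_laplacian_gap:
  assumes "finite S" "i \<in> S" "0 \<le> degree S W i" "0 < \<theta>" "laplacian_gap p S W \<theta>"
  shows "0 < degree S W i"
proof (rule ccontr)
  assume "\<not> 0 < degree S W i"
  then have d0: "degree S W i = 0" using assms(3) by simp
  have "vinner S (indicator {i})
      (mulv S (\<lambda>i j. degree S W i powr p * (if i = j then 1 else 0)) (\<lambda>_. 1)) = 0"
    using assms(1,2) d0 by (simp add: vinner_indicator_left mulv_degree_powr_diag_ones)
  then have "\<theta> * vinner S (indicator {i}) (indicator {i})
      \<le> vinner S (indicator {i}) (mulv S (laplacian p S W) (indicator {i}))"
    using assms(5) unfolding laplacian_gap_def by blast
  moreover have "mulv S (laplacian p S W) (indicator {i}) i = laplacian p S W i i"
    using assms(1,2) unfolding mulv_def by (simp add: indicator_def if_distrib[of "\<lambda>t. _ * t"] cong: if_cong)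
  ultimately show False
    using assms(1,2,4) d0 by (simp add: vinner_indicator_left laplacian_def)
qed

locale block_diagonal =
  fixes Z Ks :: "nat set" and B :: "nat \<Rightarrow> nat set" and W :: "nat \<Rightarrow> nat \<Rightarrow> real"
  assumes finite_Z: "finite Z" and finite_Ks: "finite Ks"
    and Z_eq_UN_blocks: "Z = (\<Union>k\<in>Ks. B k)"
    and blocks_disjoint: "\<And>k l. k \<in> Ks \<Longrightarrow> l \<in> Ks \<Longrightarrow> k \<noteq> l \<Longrightarrow> B k \<inter> B l = {}"
    and blocks_nonempty: "\<And>k. k \<in> Ks \<Longrightarrow> B k \<noteq> {}"
    and W_symmetric: "\<forall>i\<in>Z. \<forall>j\<in>Z. W i j = W j i"
    and W_nonneg: "\<And>k i j. k \<in> Ks \<Longrightarrow> i \<in> B k \<Longrightarrow> j \<in> B k \<Longrightarrow> 0 \<le> W i j"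
    and W_off_block: "\<And>k i j. k \<in> Ks \<Longrightarrow> i \<in> B k \<Longrightarrow> j \<in> Z \<Longrightarrow> j \<notin> B k \<Longrightarrow> W i j = 0"
begin

lemma block_subset: "k \<in> Ks \<Longrightarrow> B k \<subseteq> Z"
  using Z_eq_UN_blocks by blast

lemma finite_block: "k \<in> Ks \<Longrightarrow> finite (B k)"
  using finite_subset[OF block_subset finite_Z] .

lemma sum_eq_sum_block:
  "k \<in> Ks \<Longrightarrow> (\<And>j. j \<in> Z \<Longrightarrow> j \<notin> B k \<Longrightarrow> f j = 0) \<Longrightarrow> (\<Sum>j\<in>Z. f j) = (\<Sum>j\<in>B k. f j)"
  by (rule sum.mono_neutral_right[OF finite_Z block_subset]) auto

lemma sum_over_blocks: "(\<Sum>i\<in>Z. f i) = (\<Sum>k\<in>Ks. \<Sum>i\<in>B k. f i)"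
  by (subst Z_eq_UN_blocks, rule sum.UNION_disjoint) (use finite_Ks finite_block blocks_disjoint in auto)

lemma degree_eq_block_degree: "k \<in> Ks \<Longrightarrow> i \<in> B k \<Longrightarrow> degree Z W i = degree (B k) W i"
  unfolding degree_def by (rule sum_eq_sum_block) (auto simp: W_off_block)

lemma degree_nonneg:
  assumes "k \<in> Ks" "i \<in> B k"
  shows "0 \<le> degree Z W i"
proof -
  have "0 \<le> degree (B k) W i" unfolding degree_def using assms by (auto intro: sum_nonneg W_nonneg)
  then show ?thesis using degree_eq_block_degree[OF assms] by simp
qed

lemma laplacian_eq_block_laplacian:
  "k \<in> Ks \<Longrightarrow> i \<in> B k \<Longrightarrow> j \<in> B k \<Longrightarrow> laplacian p Z W i j = laplacian p (B k) W i j"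
  unfolding laplacian_def using block_subset by (auto simp: degree_eq_block_degree)

lemma laplacian_off_block:
  "k \<in> Ks \<Longrightarrow> i \<in> B k \<Longrightarrow> j \<in> Z \<Longrightarrow> j \<notin> B k \<Longrightarrow> laplacian p Z W i j = 0"
  unfolding laplacian_def using W_off_block by auto

lemma mulv_laplacian_eq_block:
  assumes "k \<in> Ks" "i \<in> B k"
  shows "mulv Z (laplacian p Z W) x i = mulv (B k) (laplacian p (B k) W) x i"
  unfolding mulv_def using assms
  by (subst sum_eq_sum_block[OF assms(1)]) (auto simp: laplacian_off_block laplacian_eq_block_laplacian)

lemma vinner_laplacian_eq_sum_blocks:
  "vinner Z x (mulv Z (laplacian p Z W) x) = (\<Sum>k\<in>Ks. vinner (B k) x (mulv (B k) (laplacian p (B k) W) x))"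
  unfolding vinner_def sum_over_blocks[of "\<lambda>i. x i * mulv Z (laplacian p Z W) x i"]
  by (intro sum.cong refl) (simp add: mulv_laplacian_eq_block)

definition cluster_vector :: "real \<Rightarrow> nat \<Rightarrow> nat \<Rightarrow> real" where
  "cluster_vector p k j = (if j \<in> B k then degree Z W j powr p else 0)"

lemma vinner_cluster_vector:
  "k \<in> Ks \<Longrightarrow> vinner Z (cluster_vector p k) x = (\<Sum>j\<in>B k. degree Z W j powr p * x j)"
  unfolding vinner_def cluster_vector_def by (subst sum_eq_sum_block) auto

lemma cluster_vectors_orthogonal:
  assumes "k \<in> Ks" "l \<in> Ks" "k \<noteq> l"
  shows "vinner Z (cluster_vector p k) (cluster_vector p l) = 0"
  unfolding vinner_cluster_vector[OF assms(1)] using blocks_disjoint[OF assms]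
  by (intro sum.neutral) (auto simp: cluster_vector_def)

lemma laplacian_cluster_vector:
  assumes k: "k \<in> Ks" and pos: "\<forall>j\<in>B k. 0 < degree Z W j" and i: "i \<in> Z"
  shows "mulv Z (laplacian p Z W) (cluster_vector p k) i = 0"
proof -
  let ?d = "degree Z W"
  have "mulv Z (laplacian p Z W) (cluster_vector p k) i = (\<Sum>j\<in>B k. laplacian p Z W i j * ?d j powr p)"
    unfolding mulv_def cluster_vector_def by (subst sum_eq_sum_block[OF k]) auto
  also have "\<dots> = (\<Sum>j\<in>B k. ?d i powr (- p) * ((if i = j then ?d i else 0) - W i j))"
  proof (intro sum.cong refl)
    fix j assume "j \<in> B k"
    then have "0 < ?d j" using pos by blast
    then have "?d j powr (- p) * ?d j powr p = 1" by (simp add: powr_add[symmetric])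
    then show "laplacian p Z W i j * ?d j powr p = ?d i powr (- p) * ((if i = j then ?d i else 0) - W i j)"
      using i block_subset[OF k] \<open>j \<in> B k\<close> unfolding laplacian_def by (auto simp: mult_ac)
  qed
  also have "\<dots> = ?d i powr (- p) * ((\<Sum>j\<in>B k. if i = j then ?d i else 0) - degree (B k) W i)"
    unfolding degree_def by (simp add: sum_distrib_left[symmetric] sum_subtractf)
  also have "(\<Sum>j\<in>B k. if i = j then ?d i else 0) - degree (B k) W i = 0"
  proof (cases "i \<in> B k")
    case True
    then show ?thesis using finite_block[OF k] by (simp add: degree_eq_block_degree[OF k])
  next
    case False
    have "W i j = 0" if "j \<in> B k" for j
      using W_off_block[OF k that i False] W_symmetric i block_subset[OF k] that by auto
    then show ?thesis using False finite_block[OF k] unfolding degree_def by auto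
  qed
  finally show ?thesis by simp
qed

lemma laplacian_gap_on_complement:
  assumes gaps: "\<forall>k\<in>Ks. laplacian_gap p (B k) W \<theta>"
    and x: "\<forall>k\<in>Ks. vinner Z (cluster_vector p k) x = 0"
  shows "\<theta> * vinner Z x x \<le> vinner Z x (mulv Z (laplacian p Z W) x)"
proof -
  have "\<theta> * vinner (B k) x x \<le> vinner (B k) x (mulv (B k) (laplacian p (B k) W) x)" if k: "k \<in> Ks" for k
  proof -
    have "vinner (B k) x (mulv (B k) (\<lambda>i j. degree (B k) W i powr p * (if i = j then 1 else 0)) (\<lambda>_. 1))
        = (\<Sum>j\<in>B k. degree Z W j powr p * x j)"
      unfolding vinner_def
    proof (intro sum.cong refl)
      fix a assume "a \<in> B k"
      show "x a * mulv (B k) (\<lambda>i j. degree (B k) W i powr p * (if i = j then 1 else 0)) (\<lambda>_. 1) a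
          = degree Z W a powr p * x a"
        by (subst mulv_degree_powr_diag_ones[OF finite_block[OF k] \<open>a \<in> B k\<close>])
          (simp add: degree_eq_block_degree[OF k \<open>a \<in> B k\<close>])
    qed
    also have "\<dots> = vinner Z (cluster_vector p k) x" by (simp add: vinner_cluster_vector[OF k])
    also have "\<dots> = 0" using x k by blast
    finally show ?thesis using gaps k unfolding laplacian_gap_def by blast
  qed
  then have "(\<Sum>k\<in>Ks. \<theta> * vinner (B k) x x) \<le> vinner Z x (mulv Z (laplacian p Z W) x)"
    unfolding vinner_laplacian_eq_sum_blocks by (rule sum_mono)
  then show ?thesis unfolding vinner_def sum_over_blocks[of "\<lambda>i. x i * x i"] sum_distrib_left .
qed

lemma resolvent_power_minus_cluster_projection:
  assumes gaps: "\<forall>k\<in>Ks. laplacian_gap p (B k) W \<theta>" and "0 < \<theta>" "0 < \<alpha>" "0 < \<tau>"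
    and k: "k \<in> Ks" and j: "j \<in> B k"
  defines "v \<equiv> \<lambda>k i. cluster_vector p k i / vnorm Z (cluster_vector p k)"
  shows "(vnorm Z (\<lambda>i. \<tau> powr (2 * \<alpha>)
        * mat_powr Z (\<lambda>i j. laplacian p Z W i j + (if i = j then \<tau>\<^sup>2 else 0)) (- \<alpha>) i j
        - v k j * v k i))\<^sup>2 \<le> \<theta> powr (- 2 * \<alpha>) * \<tau> powr (4 * \<alpha>)"
proof -
  have degree_pos: "0 < degree Z W i" if "l \<in> Ks" "i \<in> B l" for l i
  proof -
    have "laplacian_gap p (B l) W \<theta>" using gaps that(1) by blast
    then have "0 < degree (B l) W i"
      using degree_pos_if_laplacian_gap[OF finite_block[OF that(1)] that(2) _ \<open>0 < \<theta>\<close>]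
        degree_nonneg[OF that] by (simp add: degree_eq_block_degree[OF that])
    then show ?thesis by (simp add: degree_eq_block_degree[OF that])
  qed
  then have pos: "\<forall>j\<in>B l. 0 < degree Z W j" if "l \<in> Ks" for l
    using that by blast
  have norm: "vinner Z (cluster_vector p l) (cluster_vector p l) \<noteq> 0" if l: "l \<in> Ks" for l
  proof -
    obtain a where a: "a \<in> B l" using blocks_nonempty[OF l] by blast
    then have "0 < (cluster_vector p l a)\<^sup>2" using degree_pos[OF l a] by (simp add: cluster_vector_def)
    also have "\<dots> \<le> vinner Z (cluster_vector p l) (cluster_vector p l)"
      using a block_subset[OF l] by (intro power2_le_vinner_self finite_Z) auto
    finally show ?thesis by simp
  qed
  have vinner_v: "vinner Z (v l) x = vinner Z (cluster_vector p l) x / vnorm Z (cluster_vector p l)" for l x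
    unfolding v_def vinner_def by (simp add: sum_divide_distrib)
  interpret kernel_spectral_gap Z Ks v "laplacian p Z W" \<theta>
  proof
    show "orthonormal_on Z Ks v"
      unfolding v_def by (rule orthonormal_on_normalized) (use cluster_vectors_orthogonal norm in auto)
    show "mulv Z (laplacian p Z W) (v l) i = 0" if "l \<in> Ks" "i \<in> Z" for l i
      using laplacian_cluster_vector[OF that(1) pos[OF that(1)] that(2)]
      unfolding v_def mulv_def by (simp add: sum_divide_distrib[symmetric])
    show "\<theta> * vinner Z x x \<le> vinner Z x (mulv Z (laplacian p Z W) x)"
      if "\<forall>l\<in>Ks. vinner Z (v l) x = 0" for x
      using that norm by (intro laplacian_gap_on_complement[OF gaps]) (auto simp: vinner_v vnorm_def)
  qed (use finite_Z finite_Ks laplacian_symmetric[OF W_symmetric] \<open>0 < \<theta>\<close> in auto)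
  have sum_v: "(\<Sum>l\<in>Ks. v l j * v l i) = v k j * v k i" for i
  proof -
    have "v l j = 0" if "l \<in> Ks" "l \<noteq> k" for l
      using blocks_disjoint[OF k that(1)] that j by (auto simp: v_def cluster_vector_def)
    then show ?thesis using k finite_Ks by (simp add: sum.remove)
  qed
  have "j \<in> Z" using j block_subset[OF k] by blast
  from resolvent_power_minus_projection[OF \<open>0 < \<alpha>\<close> \<open>0 < \<tau>\<close> this] show ?thesis
    unfolding sum_v .
qed

end

lemma block_diagonal_consecutive_blocks:
  fixes N K :: nat and b :: "nat \<Rightarrow> nat" and W :: "nat \<Rightarrow> nat \<Rightarrow> real"
  defines "cl \<equiv> \<lambda>i. THE k. k \<in> {1..K} \<and> i \<in> block b k"
  assumes "b 0 = 0" and "b K = N" and strict: "\<forall>k\<in>{1..K}. b (k - 1) < b k"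
    and "\<forall>i\<in>{1..N}. \<forall>j\<in>{1..N}. W i j = W j i"
    and nonneg: "\<forall>i\<in>{1..N}. \<forall>j\<in>{1..N}. i \<noteq> j \<and> cl i = cl j \<longrightarrow> W i j \<ge> 0"
    and zero: "\<forall>i\<in>{1..N}. \<forall>j\<in>{1..N}. i = j \<or> cl i \<noteq> cl j \<longrightarrow> W i j = 0"
  shows "block_diagonal {1..N} {1..K} (block b) W"
proof
  show Z_eq_UN: "{1..N} = (\<Union>k\<in>{1..K}. block b k)" using UN_blocks[OF assms(2) strict] assms(3) by simp
  have cl: "cl i = k" if "k \<in> {1..K}" "i \<in> block b k" for k i
    unfolding cl_def using the_block_index[OF strict that] .
  show "block b k \<inter> block b l = {}" if "k \<in> {1..K}" "l \<in> {1..K}" "k \<noteq> l" for k l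
    using blocks_disjoint[OF strict that] .
  show "block b k \<noteq> {}" if "k \<in> {1..K}" for k
    using block_last_mem[OF strict that] by blast
  show "0 \<le> W i j" if "k \<in> {1..K}" "i \<in> block b k" "j \<in> block b k" for k i j
  proof -
    have "i \<in> {1..N}" "j \<in> {1..N}" using that Z_eq_UN by auto
    then show ?thesis using nonneg zero cl[OF that(1,2)] cl[OF that(1,3)] by (cases "i = j") auto
  qed
  show "W i j = 0" if "k \<in> {1..K}" "i \<in> block b k" "j \<in> {1..N}" "j \<notin> block b k" for k i j
  proof -
    obtain l where "l \<in> {1..K}" "j \<in> block b l" using \<open>j \<in> {1..N}\<close> Z_eq_UN by blast
    moreover have "i \<in> {1..N}" using that(1,2) Z_eq_UN by auto
    ultimately show ?thesis using zero cl that by metis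
  qed
qed (use assms(5) in simp_all)

theorem proposition2p9:
  fixes N K :: nat and b :: "nat \<Rightarrow> nat" and p \<theta> \<alpha> :: real
    and W :: "nat \<Rightarrow> nat \<Rightarrow> real"
  defines "Z \<equiv> {1..N}"
  defines "blk \<equiv> (\<lambda>k. {b (k - 1) + 1 .. b k})"
  defines "cl \<equiv> (\<lambda>i. THE k. k \<in> {1..K} \<and> i \<in> blk k)"
  defines "d \<equiv> degree Z W"
  defines "L0 \<equiv> laplacian p Z W"
  defines "C \<equiv> (\<lambda>\<tau>::real. \<lambda>i j. \<tau> powr (2 * \<alpha>) *
             mat_powr Z (\<lambda>i j. L0 i j + (if i = j then \<tau>\<^sup>2 else 0)) (- \<alpha>) i j)"
  defines "chi \<equiv> (\<lambda>k j. if j \<in> blk k then d j powr p else 0)"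
  defines "chib \<equiv> (\<lambda>k j. chi k j / vnorm Z (chi k))"
  assumes "N \<ge> 2" and "K < N" and "1 \<le> K"
    and "b 0 = 0" and "b K = N" and "\<forall>k\<in>{1..K}. b (k - 1) < b k"
    and "\<forall>i\<in>Z. \<forall>j\<in>Z. W i j = W j i"
    and "\<forall>i\<in>Z. \<forall>j\<in>Z. i \<noteq> j \<and> cl i = cl j \<longrightarrow> W i j \<ge> 0"
    and "\<forall>i\<in>Z. \<forall>j\<in>Z. i = j \<or> cl i \<noteq> cl j \<longrightarrow> W i j = 0"
    and "\<theta> > 0"
    and "\<forall>k\<in>{1..K}. \<forall>x. vinner (blk k) x
            (mulv (blk k) (\<lambda>i j. (degree (blk k) W i) powr p * (if i = j then 1 else 0))
                  (\<lambda>_. 1)) = 0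
           \<longrightarrow> vinner (blk k) x (mulv (blk k) (laplacian p (blk k) W) x) \<ge> \<theta> * vinner (blk k) x x"
    and "\<alpha> > 0"
  shows "\<exists>\<Xi>>0. \<forall>\<^sub>F \<tau> in at_right 0. \<forall>k\<in>{1..K}. \<forall>j\<in>blk k.
           (vnorm Z (\<lambda>i. C \<tau> i j - chib k j * chib k i))\<^sup>2 \<le> \<Xi> * \<tau> powr (4 * \<alpha>)"
proof -
  note W_conditions = assms(12-17)
  have blk: "blk = block b" by (simp add: blk_def block_def fun_eq_iff)
  interpret block_diagonal Z "{1..K}" "block b" W
    using block_diagonal_consecutive_blocks[OF W_conditions[unfolded Z_def cl_def blk]]
    unfolding Z_def .
  have gaps: "\<forall>k\<in>{1..K}. laplacian_gap p (block b k) W \<theta>"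
    using assms(19) unfolding laplacian_gap_def blk .
  have "chi = cluster_vector p" by (simp add: chi_def d_def blk cluster_vector_def fun_eq_iff)
  then have chib: "chib = (\<lambda>k i. cluster_vector p k i / vnorm Z (cluster_vector p k))"
    unfolding chib_def by simp
  have bound: "\<forall>k\<in>{1..K}. \<forall>j\<in>blk k. (vnorm Z (\<lambda>i. C \<tau> i j - chib k j * chib k i))\<^sup>2
      \<le> \<theta> powr (- 2 * \<alpha>) * \<tau> powr (4 * \<alpha>)" if "0 < \<tau>" for \<tau>
    unfolding C_def L0_def chib blk
    using resolvent_power_minus_cluster_projection[OF gaps \<open>0 < \<theta>\<close> \<open>0 < \<alpha>\<close> that] by blast
  have "\<forall>\<^sub>F \<tau> in at_right 0. \<forall>k\<in>{1..K}. \<forall>j\<in>blk k.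
      (vnorm Z (\<lambda>i. C \<tau> i j - chib k j * chib k i))\<^sup>2 \<le> \<theta> powr (- 2 * \<alpha>) * \<tau> powr (4 * \<alpha>)"
    using eventually_at_right_less[of "0::real"] by eventually_elim (rule bound)
  moreover have "0 < \<theta> powr (- 2 * \<alpha>)" using \<open>0 < \<theta>\<close> by simp
  ultimately show ?thesis by blast
qed

end
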